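(* Let $X$ be a discrete source, $f$ a deterministic encoder, $Y=f(X)$ the bitstream with alphabet $\mathcal{Y}$, and $g$ a deterministic decoder with reconstruction $\hat{X}=g(Y)$. If the codec $(f,g)$ is MSE optimal, then for all $y_1,y_2\in\mathcal{Y}$, $y_1\neq y_2$ implies $g(y_1)\neq g(y_2)$.
   Context: A codec is MSE optimal if it is optimal in the rate-distortion sense with distortion measured by mean squared error $\mathbb{E}\|X-\hat{X}\|^2$ and rate measured by the entropy of the bitstream $Y$: no other codec attains the same (or smaller) MSE at a strictly lower rate. The alphabet $\mathcal{Y}$ consists of the bitstream values occurring with positive probability. *)

theory Defs
  imports "HOL-Probability.Probability"
begin

text \<open>Shannon entropy (in bits) of a discrete distribution, as an extended
  nonnegative real (it may be infinite for countably infinite alphabets).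
  Terms with probability zero contribute 0.\<close>
definition entropy_pmf :: "'b pmf \<Rightarrow> ennreal" where
  "entropy_pmf q = (\<integral>\<^sup>+ y. ennreal (- pmf q y * log 2 (pmf q y)) \<partial>count_space UNIV)"

definition rate :: "'a pmf \<Rightarrow> ('a \<Rightarrow> 'b) \<Rightarrow> ennreal" where
  "rate p f = entropy_pmf (map_pmf f p)"

definition mse :: "'a::real_normed_vector pmf \<Rightarrow> ('a \<Rightarrow> 'b) \<Rightarrow> ('b \<Rightarrow> 'a) \<Rightarrow> ennreal" where
  "mse p f g = (\<integral>\<^sup>+ x. ennreal ((norm (x - g (f x)))\<^sup>2) \<partial>measure_pmf p)"

definition mse_optimal :: "'a::real_normed_vector pmf \<Rightarrow> ('a \<Rightarrow> 'b) \<Rightarrow> ('b \<Rightarrow> 'a) \<Rightarrow> bool" where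
  "mse_optimal p f g \<longleftrightarrow>
     \<not> (\<exists>(f' :: 'a \<Rightarrow> 'b) (g' :: 'b \<Rightarrow> 'a).
            mse p f' g' \<le> mse p f g \<and> rate p f' < rate p f)"

end

theory Submission
  imports Defs
begin

text \<open>If g y1 = g y2 for two distinct bitstream values, re-encode y2 as y1. The
  reconstruction, hence the MSE, is unchanged, while the entropy drops because
  the function x \<mapsto> -x log x is strictly subadditive: merging two atoms of
  positive probability a and b replaces -a log a - b log b by the strictly smaller
  -(a+b) log(a+b). As the rate is finite, the untouched remainder of the entropy
  sum can be cancelled, so this contradicts optimality.\<close>

lemma neg_mult_log_nonneg:
  fixes x c :: real
  assumes "1 < c" "0 \<le> x" "x \<le> 1"
  shows "0 \<le> - x * log c x"
proof (cases "x = 0")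
  case False
  then have "log c x \<le> 0" using assms by simp
  then show ?thesis using assms by (simp add: mult_nonneg_nonpos)
qed simp

lemma neg_mult_log_add_less:
  fixes a b c :: real
  assumes "1 < c" "0 < a" "0 < b"
  shows "- (a + b) * log c (a + b) < - a * log c a + - b * log c b"
proof -
  have "a * log c a < a * log c (a + b)" "b * log c b < b * log c (a + b)"
    using assms by (simp_all add: mult_strict_left_mono)
  then show ?thesis by (simp add: algebra_simps)
qed

lemma nn_integral_count_space_split_pair:
  fixes h :: "'b \<Rightarrow> ennreal"
  assumes "y1 \<noteq> y2"
  shows "(\<integral>\<^sup>+ y. h y \<partial>count_space UNIV) =
    h y1 + h y2 + (\<integral>\<^sup>+ y \<in> - {y1, y2}. h y \<partial>count_space UNIV)"
proof -
  have "(\<integral>\<^sup>+ y. h y \<partial>count_space UNIV) =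
      (\<integral>\<^sup>+ y \<in> {y1, y2} \<union> - {y1, y2}. h y \<partial>count_space UNIV)"
    by simp
  also have "\<dots> = (\<integral>\<^sup>+ y \<in> {y1, y2}. h y \<partial>count_space UNIV) +
      (\<integral>\<^sup>+ y \<in> - {y1, y2}. h y \<partial>count_space UNIV)"
    by (rule nn_integral_disjoint_pair_countspace) auto
  also have "(\<integral>\<^sup>+ y \<in> {y1, y2}. h y \<partial>count_space UNIV) = h y1 + h y2"
    using assms by (subst nn_integral_indicator_finite) auto
  finally show ?thesis .
qed

lemma entropy_pmf_split_pair:
  assumes "y1 \<noteq> y2"
  shows "entropy_pmf q =
    ennreal (- pmf q y1 * log 2 (pmf q y1)) + ennreal (- pmf q y2 * log 2 (pmf q y2)) +
    (\<integral>\<^sup>+ y \<in> - {y1, y2}. ennreal (- pmf q y * log 2 (pmf q y)) \<partial>count_space UNIV)"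
  unfolding entropy_pmf_def by (rule nn_integral_count_space_split_pair[OF assms])

lemma pmf_map_merge:
  assumes "y1 \<noteq> y2"
  shows "pmf (map_pmf (id(y2 := y1)) q) y1 = pmf q y1 + pmf q y2"
    and "pmf (map_pmf (id(y2 := y1)) q) y2 = 0"
    and "y \<notin> {y1, y2} \<Longrightarrow> pmf (map_pmf (id(y2 := y1)) q) y = pmf q y"
proof -
  have "id(y2 := y1) -` {y1} = {y1, y2}" "id(y2 := y1) -` {y2} = {}"
    using assms by (auto split: if_splits)
  then show "pmf (map_pmf (id(y2 := y1)) q) y1 = pmf q y1 + pmf q y2"
    and "pmf (map_pmf (id(y2 := y1)) q) y2 = 0"
    using assms by (simp_all add: pmf_map measure_measure_pmf_finite)
  assume "y \<notin> {y1, y2}"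
  then have "id(y2 := y1) -` {y} = {y}" by (auto split: if_splits)
  then show "pmf (map_pmf (id(y2 := y1)) q) y = pmf q y"
    by (simp add: pmf_map measure_pmf_single)
qed

lemma entropy_pmf_merge_less:
  assumes "y1 \<in> set_pmf q" "y2 \<in> set_pmf q" "y1 \<noteq> y2" "entropy_pmf q < \<infinity>"
  shows "entropy_pmf (map_pmf (id(y2 := y1)) q) < entropy_pmf q"
proof -
  define a where "a = pmf q y1"
  define b where "b = pmf q y2"
  define rest where "rest =
    (\<integral>\<^sup>+ y \<in> - {y1, y2}. ennreal (- pmf q y * log 2 (pmf q y)) \<partial>count_space UNIV)"
  have "0 < a" "0 < b" using assms(1,2) by (simp_all add: a_def b_def pmf_positive)
  have "a + b \<le> 1"
    using measure_pmf.prob_le_1[of q "{y1, y2}"] assms(3)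
    by (simp add: measure_measure_pmf_finite a_def b_def)
  have rest_merged: "rest = (\<integral>\<^sup>+ y \<in> - {y1, y2}.
      ennreal (- pmf (map_pmf (id(y2 := y1)) q) y * log 2 (pmf (map_pmf (id(y2 := y1)) q) y))
      \<partial>count_space UNIV)"
    unfolding rest_def using assms(3)
    by (intro nn_integral_cong) (auto simp: pmf_map_merge split: split_indicator)
  have merged: "entropy_pmf (map_pmf (id(y2 := y1)) q) =
      ennreal (- (a + b) * log 2 (a + b)) + ennreal 0 + rest"
    unfolding entropy_pmf_split_pair[OF assms(3)] rest_merged a_def b_def
    using assms(3) by (simp add: pmf_map_merge)
  have original: "entropy_pmf q = ennreal (- a * log 2 a) + ennreal (- b * log 2 b) + rest"
    unfolding entropy_pmf_split_pair[OF assms(3)] rest_def a_def b_def ..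
  have "rest \<noteq> \<infinity>" using assms(4) original by (auto simp: top_unique)
  have "ennreal (- (a + b) * log 2 (a + b)) < ennreal (- a * log 2 a + - b * log 2 b)"
    using neg_mult_log_add_less[of 2 a b] neg_mult_log_nonneg[of 2 "a + b"]
      \<open>0 < a\<close> \<open>0 < b\<close> \<open>a + b \<le> 1\<close>
    by (simp add: ennreal_less_iff)
  also have "\<dots> = ennreal (- a * log 2 a) + ennreal (- b * log 2 b)"
    using neg_mult_log_nonneg[of 2 a] neg_mult_log_nonneg[of 2 b]
      \<open>0 < a\<close> \<open>0 < b\<close> \<open>a + b \<le> 1\<close>
    by (intro ennreal_plus) auto
  finally show ?thesis
    unfolding merged original using \<open>rest \<noteq> \<infinity>\<close>
    by (simp add: add.commute[of _ rest] ennreal_add_left_cancel_less)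
qed

lemma mse_comp_invariant:
  assumes "g \<circ> h = g"
  shows "mse p (h \<circ> f) g = mse p f g"
  using assms unfolding mse_def by (metis comp_apply)

theorem theorem3:
  fixes p :: "'a::real_normed_vector pmf" and f :: "'a \<Rightarrow> 'b" and g :: "'b \<Rightarrow> 'a"
  assumes "mse_optimal p f g"
    and "rate p f < \<infinity>"
    and "y1 \<in> set_pmf (map_pmf f p)" and "y2 \<in> set_pmf (map_pmf f p)"
    and "y1 \<noteq> y2"
  shows "g y1 \<noteq> g y2"
proof
  assume "g y1 = g y2"
  let ?f' = "id(y2 := y1) \<circ> f"
  have "g \<circ> id(y2 := y1) = g" using \<open>g y1 = g y2\<close> by auto
  then have "mse p ?f' g = mse p f g" by (rule mse_comp_invariant)
  moreover have "rate p ?f' < rate p f"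
    using entropy_pmf_merge_less[OF assms(3-5)] assms(2)
    by (simp add: rate_def pmf.map_comp)
  ultimately show False
    using assms(1) unfolding mse_optimal_def by (metis order_refl)
qed

end
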